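(* Let $U,V$ be nonempty sets, $A$ a fuzzy subset of $U$ and $B$ a fuzzy subset of $V$. Let $\odot$ be a semi-overlap function having $1$ as neutral element and $\rightarrow$ its residual implication. Suppose $A$ is normal, i.e. there is $u_0\in U$ with $A(u_0)=1$. If $A^*=A$, then the fuzzy subset $B^*$ of $V$ defined by $$B^*(v)=\sup_{u\in U}\big\{A^*(u)\odot[(A^*(u)\rightarrow A(u))\odot(A(u)\rightarrow B(v))]\big\}$$ satisfies $B^*=B$.
   Context: A semi-overlap function is a function $\odot:[0,1]^2\to[0,1]$ such that for all $u,v\in[0,1]$: $u\odot v=v\odot u$; if $uv=0$ then $u\odot v=0$; if $uv=1$ then $u\odot v=1$; $\odot$ is increasing in each variable; and $\odot$ is left-continuous: $u\odot\sup_{i\in I}v_i=\sup_{i\in I}(u\odot v_i)$ for every $u$ and nonempty family $\{v_i\}_{i\in I}\subseteq[0,1]$. $1$ is a neutral element if $1\odot v=v$ for all $v$. The residual implication is $a\rightarrow b=\sup\{w\in[0,1]\mid a\odot w\le b\}$. A fuzzy subset of $U$ is a function $U\to[0,1]$. (The displayed $B^*$ is the FMP-solution of the quintuple implication principle for rule $A\rightarrow B$ and input $A^*$; the paper phrases the theorem as "the FMP problem satisfies the reversibility of QIP method".) *)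

theory Defs
  imports "HOL-Analysis.Analysis"
begin

text \<open>Semi-overlap functions on the unit interval [0,1], represented as real
functions of two arguments; only their values on [0,1] x [0,1] matter.\<close>

definition semi_overlap :: "(real \<Rightarrow> real \<Rightarrow> real) \<Rightarrow> bool" where
  "semi_overlap ov \<longleftrightarrow>
     (\<forall>u\<in>{0..1}. \<forall>v\<in>{0..1}. ov u v \<in> {0..1}) \<and>
     (\<forall>u\<in>{0..1}. \<forall>v\<in>{0..1}. ov u v = ov v u) \<and>
     (\<forall>u\<in>{0..1}. \<forall>v\<in>{0..1}. u * v = 0 \<longrightarrow> ov u v = 0) \<and>
     (\<forall>u\<in>{0..1}. \<forall>v\<in>{0..1}. u * v = 1 \<longrightarrow> ov u v = 1) \<and>
     (\<forall>u\<in>{0..1}. \<forall>v\<in>{0..1}. \<forall>w\<in>{0..1}. v \<le> w \<longrightarrow> ov u v \<le> ov u w) \<and>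
     (\<forall>u\<in>{0..1}. \<forall>v\<in>{0..1}. \<forall>w\<in>{0..1}. u \<le> w \<longrightarrow> ov u v \<le> ov w v) \<and>
     (\<forall>u\<in>{0..1}. \<forall>S. S \<noteq> {} \<and> S \<subseteq> {0..1} \<longrightarrow> ov u (Sup S) = (SUP v\<in>S. ov u v))"

definition one_neutral :: "(real \<Rightarrow> real \<Rightarrow> real) \<Rightarrow> bool" where
  "one_neutral ov \<longleftrightarrow> (\<forall>v\<in>{0..1}. ov 1 v = v)"

definition residual :: "(real \<Rightarrow> real \<Rightarrow> real) \<Rightarrow> real \<Rightarrow> real \<Rightarrow> real" where
  "residual ov a b = Sup {w \<in> {0..1}. ov a w \<le> b}"

definition fuzzy_subset :: "'a set \<Rightarrow> ('a \<Rightarrow> real) \<Rightarrow> bool" where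
  "fuzzy_subset X A \<longleftrightarrow> (\<forall>x\<in>X. A x \<in> {0..1})"

definition qip_fmp :: "(real \<Rightarrow> real \<Rightarrow> real) \<Rightarrow> 'a set \<Rightarrow> ('a \<Rightarrow> real) \<Rightarrow> ('b \<Rightarrow> real)
    \<Rightarrow> ('a \<Rightarrow> real) \<Rightarrow> 'b \<Rightarrow> real" where
  "qip_fmp ov U A B Astar v =
     (SUP u\<in>U. ov (Astar u) (ov (residual ov (Astar u) (A u)) (residual ov (A u) (B v))))"

end

theory Submission
  imports Defs
begin

(* With A* = A every A*(u) \<rightarrow> A(u) equals the neutral element 1, so B*(v) collapses to
   sup_u A(u) \<odot> (A(u) \<rightarrow> B(v)).  Left-continuity puts the supremum of the residuation set
   {w | a \<odot> w \<le> b} back into that set, so every term is at most B(v); at a point u0 with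
   A(u0) = 1 the term is 1 \<odot> (1 \<rightarrow> B(v)) = B(v), so the supremum is attained. *)

lemma semi_overlap_commute:
  assumes "semi_overlap ov" "u \<in> {0..1}" "v \<in> {0..1}"
  shows "ov u v = ov v u"
  using assms unfolding semi_overlap_def by (elim conjE) simp

lemma semi_overlap_zero_right:
  assumes "semi_overlap ov" "u \<in> {0..1}"
  shows "ov u 0 = 0"
proof -
  have absorbing: "\<forall>u\<in>{0..1}. \<forall>v\<in>{0..1}. u * v = 0 \<longrightarrow> ov u v = 0"
    using assms(1) unfolding semi_overlap_def by (elim conjE)
  show ?thesis using bspec[OF bspec[OF absorbing assms(2)], of 0] by simp
qed

lemma semi_overlap_mono_right:
  assumes "semi_overlap ov" "u \<in> {0..1}" "v \<in> {0..1}" "w \<in> {0..1}" "v \<le> w"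
  shows "ov u v \<le> ov u w"
  using assms unfolding semi_overlap_def by blast

lemma semi_overlap_Sup_right:
  assumes "semi_overlap ov" "u \<in> {0..1}" "S \<noteq> {}" "S \<subseteq> {0..1}"
  shows "ov u (Sup S) = (SUP v\<in>S. ov u v)"
  using assms unfolding semi_overlap_def by blast

lemma one_neutral_left:
  assumes "one_neutral ov" "v \<in> {0..1}"
  shows "ov 1 v = v"
  using assms unfolding one_neutral_def by blast

lemma one_neutral_right:
  assumes "semi_overlap ov" "one_neutral ov" "u \<in> {0..1}"
  shows "ov u 1 = u"
  using semi_overlap_commute[OF assms(1,3)] one_neutral_left[OF assms(2,3)] by simp

lemma zero_in_residuation_set:
  assumes "semi_overlap ov" "a \<in> {0..1}" "b \<in> {0..1}"
  shows "0 \<in> {w \<in> {0..1}. ov a w \<le> b}"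
  using assms semi_overlap_zero_right[OF assms(1,2)] by simp

lemma residual_in_unit:
  assumes "semi_overlap ov" "a \<in> {0..1}" "b \<in> {0..1}"
  shows "residual ov a b \<in> {0..1}"
proof -
  let ?S = "{w \<in> {0..1}. ov a w \<le> b}"
  have "0 \<in> ?S" using zero_in_residuation_set[OF assms] .
  moreover have "bdd_above ?S" by (rule bdd_aboveI[of _ 1]) auto
  ultimately have "0 \<le> Sup ?S" "Sup ?S \<le> 1"
    by (auto intro: cSup_upper cSup_least)
  then show ?thesis unfolding residual_def by simp
qed

lemma semi_overlap_residual_le:
  assumes "semi_overlap ov" "a \<in> {0..1}" "b \<in> {0..1}"
  shows "ov a (residual ov a b) \<le> b"
proof -
  let ?S = "{w \<in> {0..1}. ov a w \<le> b}"
  have nonempty: "?S \<noteq> {}" using zero_in_residuation_set[OF assms] by blast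
  have "ov a (Sup ?S) = (SUP w\<in>?S. ov a w)"
    using semi_overlap_Sup_right[OF assms(1,2) nonempty] by blast
  also have "\<dots> \<le> b" using nonempty by (auto intro: cSUP_least)
  finally show ?thesis unfolding residual_def .
qed

lemma residual_self:
  assumes "semi_overlap ov" "one_neutral ov" "a \<in> {0..1}"
  shows "residual ov a a = 1"
proof -
  have "ov a w \<le> a" if "w \<in> {0..1}" for w
    using semi_overlap_mono_right[OF assms(1,3) that, of 1] that
      one_neutral_right[OF assms] by simp
  then have "{w \<in> {0..1}. ov a w \<le> a} = {0..1::real}" by blast
  then show ?thesis unfolding residual_def by simp
qed

lemma residual_one_left:
  assumes "one_neutral ov" "b \<in> {0..1}"
  shows "residual ov 1 b = b"
proof -
  have "{w \<in> {0..1}. ov 1 w \<le> b} = {0..b}"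
    using assms(2) one_neutral_left[OF assms(1)] by force
  then show ?thesis unfolding residual_def using assms(2) by simp
qed

lemma SUP_semi_overlap_residual_normal:
  assumes "semi_overlap ov" "one_neutral ov" "fuzzy_subset U A"
    and "u0 \<in> U" "A u0 = 1" "b \<in> {0..1}"
  shows "(SUP u\<in>U. ov (A u) (residual ov (A u) b)) = b"
proof (rule cSup_eq_maximum)
  show "b \<in> (\<lambda>u. ov (A u) (residual ov (A u) b)) ` U"
  proof (rule image_eqI[OF _ assms(4)])
    show "b = ov (A u0) (residual ov (A u0) b)"
      using assms(5) residual_one_left[OF assms(2,6)] one_neutral_left[OF assms(2,6)] by simp
  qed
next
  fix x assume "x \<in> (\<lambda>u. ov (A u) (residual ov (A u) b)) ` U"
  then obtain u where "u \<in> U" and x: "x = ov (A u) (residual ov (A u) b)" by blast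
  then have "A u \<in> {0..1}" using assms(3) unfolding fuzzy_subset_def by blast
  then show "x \<le> b" unfolding x by (rule semi_overlap_residual_le[OF assms(1) _ assms(6)])
qed

lemma qip_fmp_self:
  assumes "semi_overlap ov" "one_neutral ov" "fuzzy_subset U A" "B v \<in> {0..1}"
  shows "qip_fmp ov U A B A v = (SUP u\<in>U. ov (A u) (residual ov (A u) (B v)))"
  unfolding qip_fmp_def
proof (rule SUP_cong[OF refl])
  fix u assume "u \<in> U"
  then have "A u \<in> {0..1}" using assms(3) unfolding fuzzy_subset_def by blast
  then show "ov (A u) (ov (residual ov (A u) (A u)) (residual ov (A u) (B v)))
      = ov (A u) (residual ov (A u) (B v))"
    using residual_self[OF assms(1,2)] one_neutral_left[OF assms(2)]
      residual_in_unit[OF assms(1) _ assms(4)] by simp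
qed

theorem theorem4p4:
  fixes ov :: "real \<Rightarrow> real \<Rightarrow> real"
    and U :: "'a set" and V :: "'b set"
    and A Astar :: "'a \<Rightarrow> real" and B :: "'b \<Rightarrow> real"
  assumes "U \<noteq> {}" and "V \<noteq> {}"
    and "fuzzy_subset U A" and "fuzzy_subset V B"
    and "semi_overlap ov" and "one_neutral ov"
    and "\<exists>u0\<in>U. A u0 = 1"
    and "Astar = A"
  shows "\<forall>v\<in>V. qip_fmp ov U A B Astar v = B v"
proof
  fix v assume "v \<in> V"
  then have Bv: "B v \<in> {0..1}" using assms(4) unfolding fuzzy_subset_def by blast
  obtain u0 where u0: "u0 \<in> U" "A u0 = 1" using assms(7) by blast
  have "qip_fmp ov U A B Astar v = (SUP u\<in>U. ov (A u) (residual ov (A u) (B v)))"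
    using qip_fmp_self[of ov U A B v] assms(3,5,6,8) Bv by simp
  also have "\<dots> = B v" using SUP_semi_overlap_residual_normal[OF assms(5,6,3) u0 Bv] .
  finally show "qip_fmp ov U A B Astar v = B v" .
qed

end
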